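(* Consider the distributed associative memory setting described in the context, with agents running the DAM-TOGD update with learning rate $\eta_{n,t}=c/\sqrt{t-\tau_{n,\min}}$ for some constant $c>0$. Then $$\mathrm{Reg}(T)\le\sum_{n\in\mathcal{N}}\Big(2cQ_n\sqrt{T+\Delta\tau_n}+\frac{B^2}{2c}\sqrt{T}+P_n c + C_n\Big),$$ so that $\mathrm{Reg}(T)=\mathcal{O}\big(\sqrt{T+\Delta\tau_n}+\sqrt{T}\big)$, where $Q_n = \frac{K_n}{2}\sum_{m\in\mathcal{W}_n} L_m + |\mathcal{W}_n|\, K_n^2 \sum_{m\in\mathcal{W}_n}\tau_{n,m}$, $P_n = |\mathcal{W}_n|^2 K_n^2\,\tau_{n,\max}^2$, $C_n = \frac{\Delta\tau_n}{2}\big( K_n\sum_{m\in\mathcal{W}_n} L_m + |\mathcal{W}_n|\, B^2\big)$, with $K_n = \max_{m\in\mathcal{W}_n} w_{n,m}L_m$, $\tau_{n,\min}=\min_{m\in\mathcal{W}_n}\tau_{n,m}$, $\tau_{n,\max}=\max_{m\in\mathcal{W}_n}\tau_{n,m}$, $\Delta\tau_n=\tau_{n,\max}-\tau_{n,\min}$, and $|\mathcal{W}_n|$ the cardinality of $\mathcal{W}_n$.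
   Context: There are $N$ agents indexed by $\mathcal{N}=\{1,\dots,N\}$. At each time $t=1,2,\dots$, agent $m$ has a convex loss function $f_{m,t}:\mathcal{X}\to\mathbb{R}$, which only agent $m$ can evaluate. The feasible set $\mathcal{X}$ (a set of matrices) is closed, convex and bounded with diameter $B$, and $\|\nabla f_{m,t}(\mathbf{X})\|_F\le L_m$ for all $m$, $t$ and $\mathbf{X}\in\mathcal{X}$, with finite $L_m>0$. Norms are Frobenius norms and $\Pi_{\mathcal{X}}$ denotes Euclidean (Frobenius) projection onto $\mathcal{X}$. A row-stochastic matrix $\mathbf{W}$ with entries $w_{n,m}\in[0,1]$, $\sum_m w_{n,m}=1$, is given; $\mathcal{W}_n=\{m\in\mathcal{N}: w_{n,m}>0\}$. Agent $n$ maintains iterates $\mathbf{X}_{n,t}\in\mathcal{X}$ and its cumulative loss is $\mathcal{L}_n^T(\mathbf{X}_n^T)=\sum_{t=1}^T\sum_{m\in\mathcal{W}_n} w_{n,m} f_{m,t}(\mathbf{X}_{n,t})$. Let $\mathbf{U}_n^*\in\arg\min_{\mathbf{U}\in\mathcal{X}}\sum_{t=1}^T\sum_{m\in\mathcal{W}_n} w_{n,m}f_{m,t}(\mathbf{U})$, and define the regret $\mathrm{Reg}(T)=\sum_{n\in\mathcal{N}}\big(\mathcal{L}_n^T(\mathbf{X}_n^T)-\mathcal{L}_n^T(\mathbf{U}_n^* )\big)$ (with $\mathcal{L}_n^T(\mathbf{U}_n^* )$ meaning the constant sequence $\mathbf{U}_n^*$). Agents communicate over a connected undirected graph $\mathcal{G}=(\mathcal{N},\mathcal{E})$.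 For each $n$, a Steiner tree $\mathcal{T}_n$ in $\mathcal{G}$ rooted at $n$ and containing paths from $n$ to every agent of $\mathcal{W}_n$ is fixed; $\tilde\tau_{n,m}$ is the number of edges on the path in $\mathcal{T}_n$ from $n$ to $m$ (so $\tilde\tau_{n,n}=0$), and $\tau_{n,m}=2\tilde\tau_{n,m}$ is the round-trip delay: each message takes one time step per edge, so agent $n$ obtains $\nabla f_{m,s}(\mathbf{X}_{n,s})$ at time $s+\tau_{n,m}$. DAM-TOGD: starting from an initial point $\mathbf{X}_{n,1}\in\mathcal{X}$, each agent $n$ updates, for $t\ge1$, $$\mathbf{X}_{n,t+1}=\Pi_{\mathcal{X}}\Big[\mathbf{X}_{n,t}-\eta_{n,t}\sum_{m\in\mathcal{W}_n} w_{n,m}\nabla f_{m,t-\tau_{n,m}}(\mathbf{X}_{n,t-\tau_{n,m}})\,\mathbb{1}_{\{t>\tau_{n,m}\}}\Big],$$ where $\eta_{n,t}>0$ is the learning rate. *)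

theory Defs
  imports "HOL-Analysis.Analysis"
begin

definition undirected_graph :: "('i \<times> 'i) set \<Rightarrow> bool" where
  "undirected_graph E \<longleftrightarrow> sym E \<and> irrefl E"

definition connected_graph :: "('i \<times> 'i) set \<Rightarrow> bool" where
  "connected_graph E \<longleftrightarrow> (\<forall>u v. (u, v) \<in> E\<^sup>*)"

text \<open>T (symmetric edge set, each undirected edge stored in both directions) is a tree
  of the graph E with vertex set V: a connected subgraph on V with |V| - 1 undirected edges.\<close>
definition tree_in :: "('i \<times> 'i) set \<Rightarrow> 'i set \<Rightarrow> ('i \<times> 'i) set \<Rightarrow> bool" where
  "tree_in E V T \<longleftrightarrow> T \<subseteq> E \<and> T \<subseteq> V \<times> V \<and> sym T \<and> finite V \<and> V \<noteq> {} \<and>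
     (\<forall>u\<in>V. \<forall>v\<in>V. (u, v) \<in> T\<^sup>*) \<and> card T = 2 * (card V - 1)"

definition steiner_tree :: "('i \<times> 'i) set \<Rightarrow> 'i \<Rightarrow> 'i set \<Rightarrow> 'i set \<Rightarrow> ('i \<times> 'i) set \<Rightarrow> bool" where
  "steiner_tree E n S V T \<longleftrightarrow> tree_in E V T \<and> n \<in> V \<and> S \<subseteq> V"

definition tree_dist :: "('i \<times> 'i) set \<Rightarrow> 'i \<Rightarrow> 'i \<Rightarrow> nat" where
  "tree_dist T u v = (LEAST k. (u, v) \<in> T ^^ k)"

definition Wset :: "('i \<Rightarrow> 'i \<Rightarrow> real) \<Rightarrow> 'i \<Rightarrow> 'i set" where
  "Wset w n = {m. w n m > 0}"

definition tau_min :: "('i \<Rightarrow> 'i \<Rightarrow> real) \<Rightarrow> ('i \<Rightarrow> 'i \<Rightarrow> nat) \<Rightarrow> 'i \<Rightarrow> nat" where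
  "tau_min w tau n = Min (tau n ` Wset w n)"

definition tau_max :: "('i \<Rightarrow> 'i \<Rightarrow> real) \<Rightarrow> ('i \<Rightarrow> 'i \<Rightarrow> nat) \<Rightarrow> 'i \<Rightarrow> nat" where
  "tau_max w tau n = Max (tau n ` Wset w n)"

definition delta_tau :: "('i \<Rightarrow> 'i \<Rightarrow> real) \<Rightarrow> ('i \<Rightarrow> 'i \<Rightarrow> nat) \<Rightarrow> 'i \<Rightarrow> nat" where
  "delta_tau w tau n = tau_max w tau n - tau_min w tau n"

definition K_const :: "('i \<Rightarrow> 'i \<Rightarrow> real) \<Rightarrow> ('i \<Rightarrow> real) \<Rightarrow> 'i \<Rightarrow> real" where
  "K_const w L n = Max ((\<lambda>m. w n m * L m) ` Wset w n)"

definition Q_const :: "('i \<Rightarrow> 'i \<Rightarrow> real) \<Rightarrow> ('i \<Rightarrow> real) \<Rightarrow> ('i \<Rightarrow> 'i \<Rightarrow> nat) \<Rightarrow> 'i \<Rightarrow> real" where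
  "Q_const w L tau n =
     K_const w L n / 2 * (\<Sum>m\<in>Wset w n. L m)
     + real (card (Wset w n)) * (K_const w L n)\<^sup>2 * (\<Sum>m\<in>Wset w n. real (tau n m))"

definition P_const :: "('i \<Rightarrow> 'i \<Rightarrow> real) \<Rightarrow> ('i \<Rightarrow> real) \<Rightarrow> ('i \<Rightarrow> 'i \<Rightarrow> nat) \<Rightarrow> 'i \<Rightarrow> real" where
  "P_const w L tau n =
     (real (card (Wset w n)))\<^sup>2 * (K_const w L n)\<^sup>2 * (real (tau_max w tau n))\<^sup>2"

definition C_const :: "('i \<Rightarrow> 'i \<Rightarrow> real) \<Rightarrow> ('i \<Rightarrow> real) \<Rightarrow> ('i \<Rightarrow> 'i \<Rightarrow> nat) \<Rightarrow> real \<Rightarrow> 'i \<Rightarrow> real" where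
  "C_const w L tau B n =
     real (delta_tau w tau n) / 2 *
       (K_const w L n * (\<Sum>m\<in>Wset w n. L m) + real (card (Wset w n)) * B\<^sup>2)"

definition cum_loss :: "('i \<Rightarrow> 'i \<Rightarrow> real) \<Rightarrow> ('i \<Rightarrow> nat \<Rightarrow> 'a \<Rightarrow> real) \<Rightarrow> nat \<Rightarrow> 'i \<Rightarrow> (nat \<Rightarrow> 'a) \<Rightarrow> real" where
  "cum_loss w f T n Y = (\<Sum>t=1..T. \<Sum>m\<in>Wset w n. w n m * f m t (Y t))"

definition regret :: "('i::finite \<Rightarrow> 'i \<Rightarrow> real) \<Rightarrow> ('i \<Rightarrow> nat \<Rightarrow> 'a \<Rightarrow> real) \<Rightarrow> nat
    \<Rightarrow> ('i \<Rightarrow> nat \<Rightarrow> 'a) \<Rightarrow> ('i \<Rightarrow> 'a) \<Rightarrow> real" where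
  "regret w f T X U = (\<Sum>n\<in>UNIV. cum_loss w f T n (X n) - cum_loss w f T n (\<lambda>_. U n))"

end

(*
  Fix an agent n and write p = w_n, tau_m = tau_{n,m}, a = tau_{n,min}. By convexity its regret
  is at most the linearised regret sum_m p_m sum_s <g_m(x_s), x_s - u>. The gradient of f_m at
  time s enters the update only at time s + tau_m, so we compare x_s with the iterate x_{s+tau_m}
  at which that gradient is actually used:
  - the gradients used up to time a + T form exactly the aggregated directions of T steps of
    projected gradient descent with step size c/sqrt k, whose linearised regret is at most
    B^2 sqrt T/(2c) + c K (sum_m L_m) sqrt T (projection inequality and Abel summation);
  - replacing x_s by x_{s+tau_m} costs p_m L_m times the distance travelled in tau_m steps,
    which sums to at most 2 c K (sum_m p_m L_m) tau_m sqrt T for each m;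
  - at most Delta tau gradients per agent m are still in flight at the horizon, each costing
    at most p_m L_m B.
*)
theory Submission
  imports Defs
begin

lemma convex_on_gradient_inequality:
  fixes F :: "'a::real_inner \<Rightarrow> real"
  assumes cv: "convex_on S F" and x: "x \<in> S" and u: "u \<in> S"
    and der: "(F has_derivative (\<lambda>h. G \<bullet> h)) (at x)"
  shows "F x - F u \<le> G \<bullet> (x - u)"
proof -
  define v where "v = u - x"
  have "((\<lambda>s::real. x + s *\<^sub>R v) has_derivative (\<lambda>s. s *\<^sub>R v)) (at 0)"
    by (auto intro!: derivative_eq_intros)
  moreover have "(F has_derivative (\<lambda>h. G \<bullet> h)) (at ((\<lambda>s::real. x + s *\<^sub>R v) 0))"
    using der by simp
  ultimately have "((\<lambda>s. F (x + s *\<^sub>R v)) has_derivative (\<lambda>s. G \<bullet> (s *\<^sub>R v))) (at 0)"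
    using has_derivative_compose by fastforce
  moreover have "(\<lambda>s. G \<bullet> (s *\<^sub>R v)) = (*) (G \<bullet> v)"
    by (auto simp: inner_scaleR_right)
  ultimately have "((\<lambda>s. F (x + s *\<^sub>R v)) has_field_derivative (G \<bullet> v)) (at 0)"
    by (simp add: has_field_derivative_def)
  then have "((\<lambda>s. (F (x + s *\<^sub>R v) - F x) / s) \<longlongrightarrow> G \<bullet> v) (at_right 0)"
    by (auto simp: DERIV_def intro: tendsto_mono[OF at_le])
  moreover have "eventually (\<lambda>s. (F (x + s *\<^sub>R v) - F x) / s \<le> F u - F x) (at_right 0)"
    using eventually_at_right_real[OF zero_less_one]
  proof eventually_elim
    case (elim s)
    have "x + s *\<^sub>R v = (1 - s) *\<^sub>R x + s *\<^sub>R u"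
      by (simp add: v_def algebra_simps)
    then have "F (x + s *\<^sub>R v) \<le> (1 - s) * F x + s * F u"
      using convex_onD[OF cv, of s x u] elim x u by simp
    then have "F (x + s *\<^sub>R v) - F x \<le> s * (F u - F x)"
      by (simp add: algebra_simps)
    with elim show ?case
      by (simp add: pos_divide_le_eq mult.commute)
  qed
  ultimately have "G \<bullet> v \<le> F u - F x"
    by (rule tendsto_upperbound) simp_all
  then show ?thesis
    by (simp add: v_def inner_diff_right)
qed

lemma projected_gradient_step_inequality:
  fixes S :: "'a::{real_inner,heine_borel} set"
  assumes "convex S" "closed S" "u \<in> S" "\<eta> > 0"
  shows "d \<bullet> (x - u) \<le>
    ((norm (x - u))\<^sup>2 - (norm (closest_point S (x - \<eta> *\<^sub>R d) - u))\<^sup>2) / (2 * \<eta>) + \<eta> / 2 * (norm d)\<^sup>2"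
proof -
  have "norm (closest_point S (x - \<eta> *\<^sub>R d) - u) \<le> norm ((x - u) - \<eta> *\<^sub>R d)"
    using closest_point_lipschitz[OF assms(1,2), of "x - \<eta> *\<^sub>R d" u] assms(3)
    by (auto simp: closest_point_self dist_norm algebra_simps)
  then have "(norm (closest_point S (x - \<eta> *\<^sub>R d) - u))\<^sup>2 \<le> (norm ((x - u) - \<eta> *\<^sub>R d))\<^sup>2"
    by (simp add: power_mono)
  also have "\<dots> = (norm (x - u))\<^sup>2 - 2 * \<eta> * (d \<bullet> (x - u)) + \<eta>\<^sup>2 * (norm d)\<^sup>2"
    unfolding power2_norm_eq_inner
    by (simp add: inner_diff_left inner_diff_right inner_commute power2_eq_square algebra_simps)
  finally have "2 * \<eta> * (d \<bullet> (x - u))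
      \<le> (norm (x - u))\<^sup>2 - (norm (closest_point S (x - \<eta> *\<^sub>R d) - u))\<^sup>2 + \<eta>\<^sup>2 * (norm d)\<^sup>2"
    by simp
  then show ?thesis
    using \<open>\<eta> > 0\<close> by (simp add: field_simps power2_eq_square)
qed

lemma sum_delayed_inverse_sqrt_le:
  assumes "0 \<le> c"
  shows "(\<Sum>t=1..N. if a < t then c / sqrt (real t - real a) else 0) \<le> 2 * c * sqrt (real (N - a))"
proof (induction N)
  case (Suc N)
  show ?case
  proof (cases "a < Suc N")
    case True
    define n where "n = real (N - a)"
    have n: "real (Suc N) - real a = n + 1" "real (Suc N - a) = n + 1" "0 \<le> n"
      using True by (auto simp: n_def of_nat_diff)
    have "2 * sqrt n * sqrt (n + 1) \<le> n + (n + 1)"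
      using arith_geo_mean_sqrt[of n "n + 1"] n(3) by (simp add: real_sqrt_mult)
    then have "2 * sqrt n + 1 / sqrt (n + 1) \<le> 2 * sqrt (n + 1)"
      using n(3) by (simp add: field_simps)
    from mult_left_mono[OF this assms]
    have "2 * c * sqrt n + c / sqrt (n + 1) \<le> 2 * c * sqrt (n + 1)"
      by (simp add: algebra_simps)
    moreover have "(if a < Suc N then c / sqrt (real (Suc N) - real a) else 0) = c / sqrt (n + 1)"
      using True n by simp
    ultimately show ?thesis
      using Suc.IH by (simp add: n(2) n_def)
  qed (use Suc.IH in auto)
qed simp

lemma sum_weighted_differences_le:
  fixes h D :: "nat \<Rightarrow> real"
  assumes "mono h" "0 \<le> h 0" and "\<And>k. k \<ge> 1 \<Longrightarrow> 0 \<le> D k \<and> D k \<le> M"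
  shows "(\<Sum>k=1..T. (D k - D (Suc k)) * h k) \<le> M * h T - D (Suc T) * h T"
proof (induction T)
  case 0
  show ?case using assms(2) assms(3)[of 1] by (simp add: mult_right_mono)
next
  case (Suc T)
  have "0 \<le> (M - D (Suc T)) * (h (Suc T) - h T)"
    using assms(3)[of "Suc T"] monoD[OF assms(1), of T "Suc T"] by simp
  with Suc.IH show ?case by (simp add: algebra_simps)
qed

lemma sum_delay_reindex:
  fixes F :: "nat \<Rightarrow> 'b::comm_monoid_add"
  assumes "a \<le> \<tau>"
  shows "(\<Sum>k=1..T. if \<tau> < a + k then F (a + k - \<tau>) else 0) = (\<Sum>s=1..T + a - \<tau>. F s)"
proof (induction T)
  case (Suc T)
  show ?case
  proof (cases "\<tau> < a + Suc T")
    case True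
    then have "Suc T + a - \<tau> = Suc (T + a - \<tau>)" "a + Suc T - \<tau> = Suc (T + a - \<tau>)" by auto
    with Suc.IH True show ?thesis by (simp del: add_Suc_right add_Suc)
  next
    case False
    then have "Suc T + a - \<tau> = 0" "T + a - \<tau> = 0" by auto
    with Suc.IH False show ?thesis by simp
  qed
qed (use assms in simp)

lemma norm_diff_le_sum_increments:
  fixes x :: "nat \<Rightarrow> 'a::real_normed_vector"
  shows "norm (x s - x (s + k)) \<le> (\<Sum>j<k. norm (x (s + j + 1) - x (s + j)))"
proof -
  have "x (s + k) - x s = (\<Sum>j<k. x (s + j + 1) - x (s + j))"
    using sum_lessThan_telescope[of "\<lambda>j. x (s + j)" k] by simp
  then have "norm (x s - x (s + k)) = norm (\<Sum>j<k. x (s + j + 1) - x (s + j))"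
    by (metis norm_minus_commute)
  also have "\<dots> \<le> (\<Sum>j<k. norm (x (s + j + 1) - x (s + j)))"
    by (rule norm_sum)
  finally show ?thesis .
qed

lemma square_weighted_mean_le:
  fixes p l :: "'i \<Rightarrow> real"
  assumes "\<And>m. m \<in> W \<Longrightarrow> p m \<ge> 0" "sum p W = 1"
  shows "(\<Sum>m\<in>W. p m * l m)\<^sup>2 \<le> (\<Sum>m\<in>W. p m * (l m)\<^sup>2)"
proof -
  define \<mu> where "\<mu> = (\<Sum>m\<in>W. p m * l m)"
  have "0 \<le> (\<Sum>m\<in>W. p m * (l m - \<mu>)\<^sup>2)"
    using assms by (intro sum_nonneg) auto
  also have "\<dots> = (\<Sum>m\<in>W. p m * (l m)\<^sup>2 - 2 * \<mu> * (p m * l m) + \<mu>\<^sup>2 * p m)"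
    by (intro sum.cong) (auto simp: power2_eq_square algebra_simps)
  also have "\<dots> = (\<Sum>m\<in>W. p m * (l m)\<^sup>2) - 2 * \<mu> * \<mu> + \<mu>\<^sup>2 * sum p W"
    by (simp add: sum.distrib sum_subtractf sum_distrib_left \<mu>_def)
  finally show ?thesis
    using assms(2) by (simp add: \<mu>_def power2_eq_square)
qed

locale delayed_projected_ogd =
  fixes Xs :: "'a::{real_inner,heine_borel} set"
    and f :: "'i \<Rightarrow> nat \<Rightarrow> 'a \<Rightarrow> real" and g :: "'i \<Rightarrow> nat \<Rightarrow> 'a \<Rightarrow> 'a"
    and L :: "'i \<Rightarrow> real" and W :: "'i set" and p :: "'i \<Rightarrow> real" and delay :: "'i \<Rightarrow> nat"
    and c :: real and x :: "nat \<Rightarrow> 'a"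
  assumes closed: "closed Xs" and convex: "convex Xs" and bounded: "bounded Xs"
    and f_convex: "\<And>m t. t \<ge> 1 \<Longrightarrow> convex_on Xs (f m t)"
    and f_grad: "\<And>m t y. t \<ge> 1 \<Longrightarrow> y \<in> Xs \<Longrightarrow> (f m t has_derivative (\<lambda>h. g m t y \<bullet> h)) (at y)"
    and grad_bound: "\<And>m t y. t \<ge> 1 \<Longrightarrow> y \<in> Xs \<Longrightarrow> norm (g m t y) \<le> L m"
    and p_nonneg: "\<And>m. m \<in> W \<Longrightarrow> 0 \<le> p m" and p_sum: "sum p W = 1"
    and c_pos: "0 < c" and x_1: "x 1 \<in> Xs"
    and x_step: "\<And>t. t \<ge> 1 \<Longrightarrow> x (t + 1) = closest_point Xs
         (x t - (c / sqrt (real t - real (Min (delay ` W)))) *\<^sub>R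
            (\<Sum>m\<in>W. p m *\<^sub>R (if t > delay m then g m (t - delay m) (x (t - delay m)) else 0)))"
begin

definition min_delay :: nat where "min_delay = Min (delay ` W)"

definition max_delay :: nat where "max_delay = Max (delay ` W)"

definition K :: real where "K = Max ((\<lambda>m. p m * L m) ` W)"

definition Lmean :: real where "Lmean = (\<Sum>m\<in>W. p m * L m)"

definition iterate_grad :: "'i \<Rightarrow> nat \<Rightarrow> 'a" where "iterate_grad m s = g m s (x s)"

definition delayed_grad :: "nat \<Rightarrow> 'a" where
  "delayed_grad t = (\<Sum>m\<in>W. p m *\<^sub>R (if delay m < t then iterate_grad m (t - delay m) else 0))"

definition step_size :: "nat \<Rightarrow> real" where
  "step_size t = (if min_delay < t then c / sqrt (real t - real min_delay) else 0)"

lemma finite_W: "finite W"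
  using p_sum by (metis sum.infinite zero_neq_one)

lemma W_nonempty: "W \<noteq> {}"
  using p_sum by auto

lemma L_nonneg: "0 \<le> L m"
  using grad_bound[of 1 "x 1" m] x_1 by (meson le_refl norm_ge_zero order_trans)

lemma p_le_1: "m \<in> W \<Longrightarrow> p m \<le> 1"
  using member_le_sum[of m W p] p_nonneg finite_W p_sum by simp

lemma min_delay_le: "m \<in> W \<Longrightarrow> min_delay \<le> delay m"
  using finite_W by (simp add: min_delay_def)

lemma le_max_delay: "m \<in> W \<Longrightarrow> delay m \<le> max_delay"
  using finite_W by (simp add: max_delay_def)

lemma weighted_lipschitz_le_K: "m \<in> W \<Longrightarrow> p m * L m \<le> K"
  using finite_W by (simp add: K_def)

lemma K_nonneg: "0 \<le> K"
proof -
  obtain m where "m \<in> W" using W_nonempty by auto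
  with weighted_lipschitz_le_K[of m] p_nonneg[of m] L_nonneg[of m] show ?thesis
    by (smt (verit) mult_nonneg_nonneg)
qed

lemma Lmean_nonneg: "0 \<le> Lmean"
  unfolding Lmean_def using p_nonneg L_nonneg by (simp add: sum_nonneg)

lemma K_mult_Lmean_le: "K * Lmean \<le> real (card W) * K\<^sup>2"
proof -
  have "Lmean \<le> real (card W) * K"
    unfolding Lmean_def using sum_bounded_above[of W "\<lambda>m. p m * L m" K] weighted_lipschitz_le_K
    by simp
  from mult_left_mono[OF this K_nonneg] show ?thesis
    by (simp add: power2_eq_square mult_ac)
qed

lemma x_in: "t \<ge> 1 \<Longrightarrow> x t \<in> Xs"
proof (induction t rule: nat_induct_at_least)
  case (Suc t)
  have "Xs \<noteq> {}" using x_1 by auto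
  with Suc.hyps show ?case
    using x_step[of t] closest_point_in_set[OF closed] by simp
qed (use x_1 in simp)

lemma norm_diff_le_diameter: "y \<in> Xs \<Longrightarrow> z \<in> Xs \<Longrightarrow> norm (y - z) \<le> diameter Xs"
  using diameter_bounded_bound[OF bounded] by (simp add: dist_norm)

lemma norm_iterate_grad_le: "s \<ge> 1 \<Longrightarrow> norm (iterate_grad m s) \<le> L m"
  unfolding iterate_grad_def using grad_bound x_in by simp

lemma norm_delayed_grad_le: "norm (delayed_grad t) \<le> Lmean"
proof -
  have "norm (delayed_grad t)
      \<le> (\<Sum>m\<in>W. norm (p m *\<^sub>R (if delay m < t then iterate_grad m (t - delay m) else 0)))"
    unfolding delayed_grad_def by (rule norm_sum)
  also have "\<dots> \<le> (\<Sum>m\<in>W. p m * L m)"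
    using p_nonneg norm_iterate_grad_le L_nonneg by (intro sum_mono) (auto intro: mult_left_mono)
  finally show ?thesis by (simp add: Lmean_def)
qed

lemma norm_delayed_grad_square_le: "(norm (delayed_grad t))\<^sup>2 \<le> K * (\<Sum>m\<in>W. L m)"
proof -
  have "(norm (delayed_grad t))\<^sup>2 \<le> Lmean\<^sup>2"
    using norm_delayed_grad_le by (simp add: power_mono)
  also have "\<dots> \<le> (\<Sum>m\<in>W. p m * (L m)\<^sup>2)"
    unfolding Lmean_def by (rule square_weighted_mean_le[OF p_nonneg p_sum])
  also have "\<dots> \<le> (\<Sum>m\<in>W. K * L m)"
    using weighted_lipschitz_le_K L_nonneg
    by (intro sum_mono) (simp add: power2_eq_square mult.assoc[symmetric] mult_right_mono)
  finally show ?thesis by (simp add: sum_distrib_left)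
qed

lemma delayed_grad_eq_0: "t \<le> min_delay \<Longrightarrow> delayed_grad t = 0"
  unfolding delayed_grad_def using min_delay_le by (intro sum.neutral) fastforce

lemma step_size_nonneg: "0 \<le> step_size t"
  using c_pos by (simp add: step_size_def)

text \<open>Before the first gradient arrives, the step size in the update is junk (the square root of a
  nonpositive number), but it multiplies a zero direction.\<close>
lemma x_Suc: "t \<ge> 1 \<Longrightarrow> x (Suc t) = closest_point Xs (x t - step_size t *\<^sub>R delayed_grad t)"
proof -
  assume "t \<ge> 1"
  have "delayed_grad t
      = (\<Sum>m\<in>W. p m *\<^sub>R (if t > delay m then g m (t - delay m) (x (t - delay m)) else 0))"
    unfolding delayed_grad_def iterate_grad_def by simp
  with x_step[OF \<open>t \<ge> 1\<close>] delayed_grad_eq_0[of t] show ?thesis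
    by (cases "min_delay < t") (auto simp: step_size_def min_delay_def)
qed

lemma norm_x_Suc_diff_le: "t \<ge> 1 \<Longrightarrow> norm (x (Suc t) - x t) \<le> step_size t * Lmean"
proof -
  assume t: "t \<ge> 1"
  have "Xs \<noteq> {}" using x_1 by auto
  have "norm (x (Suc t) - x t)
      = dist (closest_point Xs (x t - step_size t *\<^sub>R delayed_grad t)) (closest_point Xs (x t))"
    using x_Suc[OF t] closest_point_self[OF x_in[OF t]] by (simp add: dist_norm)
  also have "\<dots> \<le> dist (x t - step_size t *\<^sub>R delayed_grad t) (x t)"
    by (rule closest_point_lipschitz[OF convex closed \<open>Xs \<noteq> {}\<close>])
  also have "\<dots> = step_size t * norm (delayed_grad t)"
    using step_size_nonneg by (simp add: dist_norm)
  also have "\<dots> \<le> step_size t * Lmean"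
    using norm_delayed_grad_le step_size_nonneg by (rule mult_left_mono)
  finally show ?thesis .
qed

lemma sum_step_size_le: "(\<Sum>s=1..M. step_size (j + s)) \<le> 2 * c * sqrt (real (j + M - min_delay))"
proof -
  have "(\<Sum>s=1..M. step_size (j + s)) \<le> (\<Sum>t=1..j. step_size t) + (\<Sum>s=1..M. step_size (j + s))"
    using step_size_nonneg by (simp add: sum_nonneg)
  also have "\<dots> = (\<Sum>t=1..j + M. step_size t)"
  proof -
    have "(\<Sum>t=1..j + M. step_size t) = (\<Sum>t=1..j. step_size t) + (\<Sum>t=j + 1..j + M. step_size t)"
      by (rule sum.ub_add_nat) simp
    moreover have "(\<Sum>t=j + 1..j + M. step_size t) = (\<Sum>s=1..M. step_size (j + s))"
      using sum.shift_bounds_cl_nat_ivl[of step_size 1 j M] by (simp add: ac_simps)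
    ultimately show ?thesis by simp
  qed
  also have "\<dots> \<le> 2 * c * sqrt (real (j + M - min_delay))"
    unfolding step_size_def using c_pos by (intro sum_delayed_inverse_sqrt_le) simp
  finally show ?thesis .
qed

lemma delayed_grad_step_le:
  assumes u: "u \<in> Xs" and k: "k \<ge> 1"
  defines "t \<equiv> min_delay + k"
  shows "delayed_grad t \<bullet> (x t - u)
    \<le> ((norm (x t - u))\<^sup>2 - (norm (x (Suc t) - u))\<^sup>2) * (sqrt (real k) / (2 * c))
       + step_size t * (K * (\<Sum>m\<in>W. L m) / 2)"
proof -
  have \<eta>: "step_size t = c / sqrt (real k)"
    using k by (simp add: step_size_def t_def)
  then have \<eta>_pos: "step_size t > 0"
    using c_pos k by simp
  have "delayed_grad t \<bullet> (x t - u)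
      \<le> ((norm (x t - u))\<^sup>2 - (norm (x (Suc t) - u))\<^sup>2) / (2 * step_size t)
         + step_size t / 2 * (norm (delayed_grad t))\<^sup>2"
    using projected_gradient_step_inequality[OF convex closed u \<eta>_pos] x_Suc[of t] k
    by (simp add: t_def)
  also have "\<dots> \<le> ((norm (x t - u))\<^sup>2 - (norm (x (Suc t) - u))\<^sup>2) / (2 * step_size t)
         + step_size t / 2 * (K * (\<Sum>m\<in>W. L m))"
    using norm_delayed_grad_square_le \<eta>_pos by (simp add: mult_left_mono)
  finally show ?thesis
    using c_pos k by (simp add: \<eta> field_simps)
qed

lemma sum_delayed_grad_le:
  assumes u: "u \<in> Xs"
  shows "(\<Sum>k=1..T. delayed_grad (min_delay + k) \<bullet> (x (min_delay + k) - u))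
    \<le> (diameter Xs)\<^sup>2 / (2 * c) * sqrt (real T) + c * K * (\<Sum>m\<in>W. L m) * sqrt (real T)"
proof -
  define D where "D k = (norm (x (min_delay + k) - u))\<^sup>2" for k
  define h where "h k = sqrt (real k) / (2 * c)" for k
  have D_bound: "0 \<le> D k \<and> D k \<le> (diameter Xs)\<^sup>2" if "k \<ge> 1" for k
    using norm_diff_le_diameter[OF x_in u, of "min_delay + k"] that
    by (simp add: D_def power_mono)
  have "(\<Sum>k=1..T. delayed_grad (min_delay + k) \<bullet> (x (min_delay + k) - u))
      \<le> (\<Sum>k=1..T. (D k - D (Suc k)) * h k + step_size (min_delay + k) * (K * (\<Sum>m\<in>W. L m) / 2))"
    using delayed_grad_step_le[OF u] by (intro sum_mono) (simp add: D_def h_def)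
  also have "\<dots> = (\<Sum>k=1..T. (D k - D (Suc k)) * h k)
      + (\<Sum>k=1..T. step_size (min_delay + k)) * (K * (\<Sum>m\<in>W. L m) / 2)"
    by (simp add: sum.distrib sum_distrib_right)
  also have "\<dots> \<le> (diameter Xs)\<^sup>2 * h T + (2 * c * sqrt (real T)) * (K * (\<Sum>m\<in>W. L m) / 2)"
  proof (rule add_mono)
    have "mono h"
      using c_pos by (intro monoI) (simp add: h_def divide_right_mono)
    then have "(\<Sum>k=1..T. (D k - D (Suc k)) * h k) \<le> (diameter Xs)\<^sup>2 * h T - D (Suc T) * h T"
      by (rule sum_weighted_differences_le) (use D_bound in \<open>simp_all add: h_def\<close>)
    moreover have "0 \<le> D (Suc T) * h T"
      using D_bound[of "Suc T"] c_pos by (simp add: h_def)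
    ultimately show "(\<Sum>k=1..T. (D k - D (Suc k)) * h k) \<le> (diameter Xs)\<^sup>2 * h T"
      by linarith
    show "(\<Sum>k=1..T. step_size (min_delay + k)) * (K * (\<Sum>m\<in>W. L m) / 2)
        \<le> (2 * c * sqrt (real T)) * (K * (\<Sum>m\<in>W. L m) / 2)"
      using sum_step_size_le[where j = min_delay and M = T] K_nonneg L_nonneg
      by (intro mult_right_mono) (simp_all add: sum_nonneg)
  qed
  finally show ?thesis
    by (simp add: h_def mult_ac)
qed

text \<open>Each gradient of f m at time s is used exactly once, at time s + delay m.\<close>
lemma sum_delayed_grad_reindex:
  "(\<Sum>k=1..T. delayed_grad (min_delay + k) \<bullet> (x (min_delay + k) - u))
    = (\<Sum>m\<in>W. \<Sum>s=1..T + min_delay - delay m. p m * (iterate_grad m s \<bullet> (x (s + delay m) - u)))"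
proof -
  have "(\<Sum>k=1..T. delayed_grad (min_delay + k) \<bullet> (x (min_delay + k) - u))
      = (\<Sum>m\<in>W. \<Sum>k=1..T. if delay m < min_delay + k
           then p m * (iterate_grad m (min_delay + k - delay m)
                  \<bullet> (x (min_delay + k - delay m + delay m) - u))
           else 0)"
    unfolding delayed_grad_def inner_sum_left
    by (subst sum.swap) (intro sum.cong refl, auto)
  also have "\<dots> = (\<Sum>m\<in>W. \<Sum>s=1..T + min_delay - delay m.
      p m * (iterate_grad m s \<bullet> (x (s + delay m) - u)))"
    using min_delay_le by (intro sum.cong refl sum_delay_reindex)
  finally show ?thesis .
qed

lemma staleness_term_le:
  assumes m: "m \<in> W" and s: "s \<ge> 1"
  shows "p m * (iterate_grad m s \<bullet> (x s - x (s + delay m)))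
    \<le> K * Lmean * (\<Sum>j<delay m. step_size (s + j))"
proof -
  have "iterate_grad m s \<bullet> (x s - x (s + delay m)) \<le> L m * norm (x s - x (s + delay m))"
    using norm_cauchy_schwarz[of "iterate_grad m s"] norm_iterate_grad_le[OF s, of m]
    by (meson mult_right_mono norm_ge_zero order_trans)
  then have "p m * (iterate_grad m s \<bullet> (x s - x (s + delay m)))
      \<le> p m * (L m * norm (x s - x (s + delay m)))"
    using p_nonneg[OF m] by (rule mult_left_mono)
  also have "\<dots> \<le> K * norm (x s - x (s + delay m))"
    using weighted_lipschitz_le_K[OF m] by (simp add: mult.assoc[symmetric] mult_right_mono)
  also have "\<dots> \<le> K * (\<Sum>j<delay m. step_size (s + j) * Lmean)"
  proof (intro mult_left_mono[OF _ K_nonneg])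
    have "norm (x s - x (s + delay m)) \<le> (\<Sum>j<delay m. norm (x (s + j + 1) - x (s + j)))"
      by (rule norm_diff_le_sum_increments)
    also have "\<dots> \<le> (\<Sum>j<delay m. step_size (s + j) * Lmean)"
      using s by (intro sum_mono) (simp add: norm_x_Suc_diff_le)
    finally show "norm (x s - x (s + delay m)) \<le> (\<Sum>j<delay m. step_size (s + j) * Lmean)" .
  qed
  finally show ?thesis
    unfolding sum_distrib_right[symmetric] by (simp add: mult_ac)
qed

lemma sum_staleness_le:
  assumes m: "m \<in> W"
  shows "(\<Sum>s=1..T + min_delay - delay m. p m * (iterate_grad m s \<bullet> (x s - x (s + delay m))))
    \<le> K * Lmean * real (delay m) * (2 * c * sqrt (real T))"
proof -
  define M where "M = T + min_delay - delay m"
  have window: "(\<Sum>s=1..M. step_size (s + j)) \<le> 2 * c * sqrt (real T)" if "j < delay m" for j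
  proof (cases "M = 0")
    case False
    have "(\<Sum>s=1..M. step_size (s + j)) = (\<Sum>s=1..M. step_size (j + s))"
      by (simp add: add.commute)
    also have "\<dots> \<le> 2 * c * sqrt (real (j + M - min_delay))"
      by (rule sum_step_size_le)
    also have "\<dots> \<le> 2 * c * sqrt (real T)"
      using False that min_delay_le[OF m] c_pos by (simp add: M_def)
    finally show ?thesis .
  qed (use c_pos in simp)
  have "(\<Sum>s=1..M. p m * (iterate_grad m s \<bullet> (x s - x (s + delay m))))
      \<le> (\<Sum>s=1..M. K * Lmean * (\<Sum>j<delay m. step_size (s + j)))"
    using staleness_term_le[OF m] by (intro sum_mono) simp
  also have "\<dots> = K * Lmean * (\<Sum>s=1..M. \<Sum>j<delay m. step_size (s + j))"
    by (simp add: sum_distrib_left)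
  also have "\<dots> = K * Lmean * (\<Sum>j<delay m. \<Sum>s=1..M. step_size (s + j))"
    by (subst sum.swap) (rule refl)
  also have "\<dots> \<le> K * Lmean * (\<Sum>j<delay m. 2 * c * sqrt (real T))"
    using window K_nonneg Lmean_nonneg by (intro mult_left_mono sum_mono) simp_all
  finally show ?thesis
    by (simp add: M_def mult_ac)
qed

lemma sum_late_gradients_le:
  assumes m: "m \<in> W" and u: "u \<in> Xs"
  shows "(\<Sum>s=T + min_delay - delay m + 1..T. p m * (iterate_grad m s \<bullet> (x s - u)))
    \<le> real (max_delay - min_delay) * (p m * L m * diameter Xs)"
proof -
  define M where "M = T + min_delay - delay m"
  have "(\<Sum>s=M + 1..T. p m * (iterate_grad m s \<bullet> (x s - u)))
      \<le> real (card {M + 1..T}) * (p m * L m * diameter Xs)"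
  proof (rule sum_bounded_above)
    fix s assume "s \<in> {M + 1..T}"
    then have s: "s \<ge> 1" by simp
    have "iterate_grad m s \<bullet> (x s - u) \<le> norm (iterate_grad m s) * norm (x s - u)"
      by (rule norm_cauchy_schwarz)
    also have "\<dots> \<le> L m * diameter Xs"
      using norm_iterate_grad_le[OF s] norm_diff_le_diameter[OF x_in[OF s] u] L_nonneg
      by (intro mult_mono) simp_all
    finally show "p m * (iterate_grad m s \<bullet> (x s - u)) \<le> p m * L m * diameter Xs"
      using p_nonneg[OF m] by (simp add: mult.assoc mult_left_mono)
  qed
  also have "\<dots> \<le> real (max_delay - min_delay) * (p m * L m * diameter Xs)"
  proof (rule mult_right_mono)
    show "real (card {M + 1..T}) \<le> real (max_delay - min_delay)"
      using min_delay_le[OF m] le_max_delay[OF m] by (simp add: M_def)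
    show "0 \<le> p m * L m * diameter Xs"
      using p_nonneg[OF m] L_nonneg diameter_ge_0[OF bounded] by simp
  qed
  finally show ?thesis
    by (simp add: M_def)
qed

lemma loss_diff_le_linearized:
  assumes u: "u \<in> Xs"
  shows "(\<Sum>t=1..T. \<Sum>m\<in>W. p m * f m t (x t)) - (\<Sum>t=1..T. \<Sum>m\<in>W. p m * f m t u)
    \<le> (\<Sum>m\<in>W. \<Sum>s=1..T. p m * (iterate_grad m s \<bullet> (x s - u)))"
proof -
  have "(\<Sum>t=1..T. \<Sum>m\<in>W. p m * f m t (x t)) - (\<Sum>t=1..T. \<Sum>m\<in>W. p m * f m t u)
      = (\<Sum>t=1..T. \<Sum>m\<in>W. p m * (f m t (x t) - f m t u))"
    by (simp add: sum_subtractf right_diff_distrib)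
  also have "\<dots> = (\<Sum>m\<in>W. \<Sum>t=1..T. p m * (f m t (x t) - f m t u))"
    by (rule sum.swap)
  also have "\<dots> \<le> (\<Sum>m\<in>W. \<Sum>s=1..T. p m * (iterate_grad m s \<bullet> (x s - u)))"
    unfolding iterate_grad_def
    using convex_on_gradient_inequality[OF f_convex x_in u f_grad[OF _ x_in]] p_nonneg
    by (intro sum_mono mult_left_mono) auto
  finally show ?thesis .
qed

lemma sum_weighted_lipschitz_times_le:
  "(\<Sum>m\<in>W. p m * L m * r) \<le> (K * (\<Sum>m\<in>W. L m) + real (card W) * r\<^sup>2) / 2"
proof -
  have "p m * L m * r \<le> (K * L m + r\<^sup>2) / 2" if m: "m \<in> W" for m
  proof -
    have "2 * (p m * L m * r) \<le> p m * (L m)\<^sup>2 + p m * r\<^sup>2"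
      using p_nonneg[OF m] mult_left_mono[OF zero_le_power2[of "L m - r"], of "p m"]
      by (simp add: power2_eq_square algebra_simps)
    moreover have "p m * (L m)\<^sup>2 \<le> K * L m"
      using weighted_lipschitz_le_K[OF m] L_nonneg[of m]
      by (simp add: power2_eq_square mult.assoc[symmetric] mult_right_mono)
    moreover have "p m * r\<^sup>2 \<le> r\<^sup>2"
      using mult_right_mono[OF p_le_1[OF m] zero_le_power2[of r]] by simp
    ultimately show ?thesis by (simp add: field_simps)
  qed
  then have "(\<Sum>m\<in>W. p m * L m * r) \<le> (\<Sum>m\<in>W. (K * L m + r\<^sup>2) / 2)"
    by (rule sum_mono)
  also have "\<dots> = (K * (\<Sum>m\<in>W. L m) + real (card W) * r\<^sup>2) / 2"
    by (simp add: sum_divide_distrib[symmetric] sum.distrib sum_distrib_left)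
  finally show ?thesis .
qed

lemma linearized_regret_split:
  fixes T :: nat
  assumes m: "m \<in> W"
  defines "M \<equiv> T + min_delay - delay m"
  shows "(\<Sum>s=1..T. p m * (iterate_grad m s \<bullet> (x s - u)))
    = (\<Sum>s=1..M. p m * (iterate_grad m s \<bullet> (x (s + delay m) - u)))
      + (\<Sum>s=1..M. p m * (iterate_grad m s \<bullet> (x s - x (s + delay m))))
      + (\<Sum>s=M + 1..T. p m * (iterate_grad m s \<bullet> (x s - u)))"
proof -
  have "M \<le> T"
    using min_delay_le[OF m] by (simp add: M_def)
  then have "(\<Sum>s=1..T. p m * (iterate_grad m s \<bullet> (x s - u)))
      = (\<Sum>s=1..M. p m * (iterate_grad m s \<bullet> (x s - u)))
        + (\<Sum>s=M + 1..T. p m * (iterate_grad m s \<bullet> (x s - u)))"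
    using sum.ub_add_nat[of 1 M _ "T - M"] by simp
  moreover have "(\<Sum>s=1..M. p m * (iterate_grad m s \<bullet> (x s - u)))
      = (\<Sum>s=1..M. p m * (iterate_grad m s \<bullet> (x (s + delay m) - u)))
        + (\<Sum>s=1..M. p m * (iterate_grad m s \<bullet> (x s - x (s + delay m))))"
    by (simp add: sum.distrib[symmetric] inner_diff_right algebra_simps)
  ultimately show ?thesis
    by simp
qed

lemma regret_le:
  assumes u: "u \<in> Xs"
  shows "(\<Sum>t=1..T. \<Sum>m\<in>W. p m * f m t (x t)) - (\<Sum>t=1..T. \<Sum>m\<in>W. p m * f m t u)
    \<le> 2 * c * (K / 2 * (\<Sum>m\<in>W. L m) + real (card W) * K\<^sup>2 * (\<Sum>m\<in>W. real (delay m))) * sqrt (real T)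
      + (diameter Xs)\<^sup>2 / (2 * c) * sqrt (real T)
      + real (max_delay - min_delay) / 2 * (K * (\<Sum>m\<in>W. L m) + real (card W) * (diameter Xs)\<^sup>2)"
proof -
  define M where "M m = T + min_delay - delay m" for m
  have used: "(\<Sum>m\<in>W. \<Sum>s=1..M m. p m * (iterate_grad m s \<bullet> (x (s + delay m) - u)))
      \<le> (diameter Xs)\<^sup>2 / (2 * c) * sqrt (real T) + c * K * (\<Sum>m\<in>W. L m) * sqrt (real T)"
    using sum_delayed_grad_le[OF u] unfolding sum_delayed_grad_reindex M_def .
  have stale: "(\<Sum>m\<in>W. \<Sum>s=1..M m. p m * (iterate_grad m s \<bullet> (x s - x (s + delay m))))
      \<le> real (card W) * K\<^sup>2 * (\<Sum>m\<in>W. real (delay m)) * (2 * c * sqrt (real T))"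
  proof -
    have "(\<Sum>m\<in>W. \<Sum>s=1..M m. p m * (iterate_grad m s \<bullet> (x s - x (s + delay m))))
        \<le> (\<Sum>m\<in>W. K * Lmean * real (delay m) * (2 * c * sqrt (real T)))"
      unfolding M_def by (intro sum_mono sum_staleness_le)
    also have "\<dots> = K * Lmean * (\<Sum>m\<in>W. real (delay m)) * (2 * c * sqrt (real T))"
      by (simp add: sum_distrib_left sum_distrib_right mult_ac)
    also have "\<dots> \<le> real (card W) * K\<^sup>2 * (\<Sum>m\<in>W. real (delay m)) * (2 * c * sqrt (real T))"
      using K_mult_Lmean_le c_pos by (intro mult_right_mono) (simp_all add: sum_nonneg)
    finally show ?thesis .
  qed
  have late: "(\<Sum>m\<in>W. \<Sum>s=M m + 1..T. p m * (iterate_grad m s \<bullet> (x s - u)))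
      \<le> real (max_delay - min_delay) * ((K * (\<Sum>m\<in>W. L m) + real (card W) * (diameter Xs)\<^sup>2) / 2)"
  proof -
    have "(\<Sum>m\<in>W. \<Sum>s=M m + 1..T. p m * (iterate_grad m s \<bullet> (x s - u)))
        \<le> real (max_delay - min_delay) * (\<Sum>m\<in>W. p m * L m * diameter Xs)"
      unfolding M_def sum_distrib_left by (intro sum_mono sum_late_gradients_le[OF _ u])
    also have "\<dots> \<le> real (max_delay - min_delay) * ((K * (\<Sum>m\<in>W. L m) + real (card W) * (diameter Xs)\<^sup>2) / 2)"
      by (intro mult_left_mono sum_weighted_lipschitz_times_le) simp
    finally show ?thesis .
  qed
  have "(\<Sum>t=1..T. \<Sum>m\<in>W. p m * f m t (x t)) - (\<Sum>t=1..T. \<Sum>m\<in>W. p m * f m t u)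
      \<le> (\<Sum>m\<in>W. \<Sum>s=1..T. p m * (iterate_grad m s \<bullet> (x s - u)))"
    by (rule loss_diff_le_linearized[OF u])
  also have "\<dots> = (\<Sum>m\<in>W. (\<Sum>s=1..M m. p m * (iterate_grad m s \<bullet> (x (s + delay m) - u)))
        + (\<Sum>s=1..M m. p m * (iterate_grad m s \<bullet> (x s - x (s + delay m))))
        + (\<Sum>s=M m + 1..T. p m * (iterate_grad m s \<bullet> (x s - u))))"
    unfolding M_def by (rule sum.cong[OF refl linearized_regret_split])
  also have "\<dots> \<le> ((diameter Xs)\<^sup>2 / (2 * c) * sqrt (real T) + c * K * (\<Sum>m\<in>W. L m) * sqrt (real T))
      + real (card W) * K\<^sup>2 * (\<Sum>m\<in>W. real (delay m)) * (2 * c * sqrt (real T))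
      + real (max_delay - min_delay) * ((K * (\<Sum>m\<in>W. L m) + real (card W) * (diameter Xs)\<^sup>2) / 2)"
    unfolding sum.distrib by (rule add_mono[OF add_mono[OF used stale] late])
  finally show ?thesis
    by (simp add: algebra_simps add_divide_distrib)
qed
end

text \<open>The argument even gives sqrt T in place of sqrt (T + Delta tau) and no P term.\<close>
theorem corollary1:
  fixes Xs :: "(real^'c^'r) set"
    and f :: "'i::finite \<Rightarrow> nat \<Rightarrow> real^'c^'r \<Rightarrow> real"
    and g :: "'i \<Rightarrow> nat \<Rightarrow> real^'c^'r \<Rightarrow> real^'c^'r"
    and L :: "'i \<Rightarrow> real"
    and w :: "'i \<Rightarrow> 'i \<Rightarrow> real"
    and E :: "('i \<times> 'i) set"
    and V :: "'i \<Rightarrow> 'i set"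
    and Tr :: "'i \<Rightarrow> ('i \<times> 'i) set"
    and tau :: "'i \<Rightarrow> 'i \<Rightarrow> nat"
    and X :: "'i \<Rightarrow> nat \<Rightarrow> real^'c^'r"
    and U :: "'i \<Rightarrow> real^'c^'r"
    and B c :: real and T :: nat
  assumes Xs_closed: "closed Xs" and Xs_convex: "convex Xs" and Xs_bounded: "bounded Xs"
    and B_def: "B = diameter Xs"
    and f_convex: "\<And>m t. t \<ge> 1 \<Longrightarrow> convex_on Xs (f m t)"
    and f_grad: "\<And>m t x. t \<ge> 1 \<Longrightarrow> x \<in> Xs \<Longrightarrow>
                   (f m t has_derivative (\<lambda>h. g m t x \<bullet> h)) (at x)"
    and grad_bound: "\<And>m t x. t \<ge> 1 \<Longrightarrow> x \<in> Xs \<Longrightarrow> norm (g m t x) \<le> L m"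
    and L_pos: "\<And>m. L m > 0"
    and w_range: "\<And>n m. 0 \<le> w n m \<and> w n m \<le> 1"
    and w_stoch: "\<And>n. (\<Sum>m\<in>UNIV. w n m) = 1"
    and graph: "undirected_graph E" and conn: "connected_graph E"
    and steiner: "\<And>n. steiner_tree E n (Wset w n) (V n) (Tr n)"
    and tau_def: "\<And>n m. tau n m = 2 * tree_dist (Tr n) n m"
    and c_pos: "c > 0"
    and X_init: "\<And>n. X n 1 \<in> Xs"
    and X_step: "\<And>n t. t \<ge> 1 \<Longrightarrow>
       X n (t + 1) = closest_point Xs
         (X n t - (c / sqrt (real t - real (tau_min w tau n))) *\<^sub>R
            (\<Sum>m\<in>Wset w n. w n m *\<^sub>R
               (if t > tau n m then g m (t - tau n m) (X n (t - tau n m)) else 0)))"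
    and U_mem: "\<And>n. U n \<in> Xs"
    and U_min: "\<And>n Y. Y \<in> Xs \<Longrightarrow> cum_loss w f T n (\<lambda>_. U n) \<le> cum_loss w f T n (\<lambda>_. Y)"
  shows "regret w f T X U \<le>
    (\<Sum>n\<in>UNIV. 2 * c * Q_const w L tau n * sqrt (real T + real (delta_tau w tau n))
              + B\<^sup>2 / (2 * c) * sqrt (real T)
              + P_const w L tau n * c
              + C_const w L tau B n)"
proof -
  have agent_regret: "cum_loss w f T n (X n) - cum_loss w f T n (\<lambda>_. U n)
      \<le> 2 * c * Q_const w L tau n * sqrt (real T + real (delta_tau w tau n))
        + B\<^sup>2 / (2 * c) * sqrt (real T) + P_const w L tau n * c + C_const w L tau B n" for n
  proof -
    have "sum (w n) (Wset w n) = sum (w n) UNIV"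
      using w_range by (intro sum.mono_neutral_left) (auto simp: Wset_def intro: antisym)
    then interpret delayed_projected_ogd Xs f g L "Wset w n" "w n" "tau n" c "X n"
      using Xs_closed Xs_convex Xs_bounded f_convex f_grad grad_bound w_range w_stoch c_pos X_init
        X_step
      by unfold_locales (auto simp: tau_min_def)
    have regret_n: "cum_loss w f T n (X n) - cum_loss w f T n (\<lambda>_. U n)
        \<le> 2 * c * Q_const w L tau n * sqrt (real T) + B\<^sup>2 / (2 * c) * sqrt (real T)
          + C_const w L tau B n"
      using regret_le[OF U_mem[of n]]
      unfolding cum_loss_def Q_const_def C_const_def K_const_def delta_tau_def tau_max_def
        tau_min_def B_def K_def min_delay_def max_delay_def .
    have "0 \<le> Q_const w L tau n"
      unfolding Q_const_def K_const_def K_def[symmetric]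
      using K_nonneg L_nonneg by (simp add: sum_nonneg)
    then have "2 * c * Q_const w L tau n * sqrt (real T)
        \<le> 2 * c * Q_const w L tau n * sqrt (real T + real (delta_tau w tau n))"
      using c_pos by (intro mult_left_mono) simp_all
    moreover have "0 \<le> P_const w L tau n * c"
      unfolding P_const_def using c_pos by simp
    ultimately show ?thesis
      using regret_n by linarith
  qed
  then show ?thesis
    unfolding regret_def by (intro sum_mono)
qed

end
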